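(* Let $n\ge 2k$, let $E$ be a real symmetric $n\times n$ matrix with $E\in\Gamma_k^+$, and let $v\in\mathbb R^n$. Then $$\Big\langle T_{k-1}(E),\ \tfrac12|v|^2 I-v\otimes v\Big\rangle\ \ge\ \frac{(n-2k)(n-k+1)}{2n}\,\sigma_{k-1}(E)\,|v|^2.$$
   Context: $\sigma_j$ is the $j$-th elementary symmetric function of eigenvalues, $\Gamma_k^+=\{S:\sigma_j(S)>0,1\le j\le k\}$, $T_{k-1}(S)=\sum_{i=0}^{k-1}(-1)^i\sigma_{k-1-i}(S)S^i$ is the Newton transformation, and $\langle S_1,S_2\rangle=\mathrm{tr}(S_1S_2)$. *)

theory Defs
  imports "Jordan_Normal_Form.Char_Poly"
begin

definition sym_mat :: "real mat \<Rightarrow> bool" where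
  "sym_mat E \<longleftrightarrow> square_mat E \<and> transpose_mat E = E"

text \<open>For real symmetric matrices such a list exists and is unique up to order.\<close>
definition eigvals :: "real mat \<Rightarrow> real list" where
  "eigvals E = (SOME es. char_poly E = (\<Prod>a\<leftarrow>es. [:- a, 1:]))"

definition esym :: "nat \<Rightarrow> real list \<Rightarrow> real" where
  "esym j xs = (\<Sum>S \<in> {S. S \<subseteq> {0..<length xs} \<and> card S = j}. \<Prod>i\<in>S. xs ! i)"

definition sigma :: "nat \<Rightarrow> real mat \<Rightarrow> real" where
  "sigma j E = esym j (eigvals E)"

definition Gamma_plus :: "nat \<Rightarrow> real mat set" where
  "Gamma_plus k = {S. \<forall>j\<in>{1..k}. sigma j S > 0}"

definition newton_T :: "nat \<Rightarrow> real mat \<Rightarrow> real mat" where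
  "newton_T k S = mat (dim_row S) (dim_col S)
     (\<lambda>(a, b). \<Sum>i<k. (-1) ^ i * sigma (k - 1 - i) S * (S ^\<^sub>m i) $$ (a, b))"

definition mat_trace :: "real mat \<Rightarrow> real" where
  "mat_trace A = (\<Sum>i<dim_row A. A $$ (i, i))"

definition mat_inner :: "real mat \<Rightarrow> real mat \<Rightarrow> real" where
  "mat_inner S1 S2 = mat_trace (S1 * S2)"

definition vtensor :: "real vec \<Rightarrow> real vec \<Rightarrow> real mat" where
  "vtensor v w = mat (dim_vec v) (dim_vec w) (\<lambda>(i, j). v $ i * w $ j)"

end

theory Submission
  imports Defs
begin

text \<open>Diagonalise \<open>E = U diag(\<lambda>) U\<^sup>T\<close> (by Householder reflections). Then
  \<open>T\<^sub>k\<^sub>-\<^sub>1(E) = U diag(t) U\<^sup>T\<close>, where \<open>t\<^sub>a = \<sigma>\<^sub>k\<^sub>-\<^sub>1(\<lambda>|a)\<close> is the elementary symmetric function of the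
  eigenvalues other than \<open>\<lambda>\<^sub>a\<close>, so with \<open>w = U\<^sup>T v\<close> the left-hand side equals
  \<open>|v|\<^sup>2/2 \<cdot> \<Sum>\<^sub>a t\<^sub>a - \<Sum>\<^sub>a t\<^sub>a w\<^sub>a\<^sup>2\<close>. The first sum is \<open>(n-k+1) \<sigma>\<^sub>k\<^sub>-\<^sub>1(\<lambda>)\<close>, and for \<open>\<lambda> \<in> \<Gamma>\<^sub>k\<^sup>+\<close> and
  \<open>n \<ge> 2k\<close> each \<open>t\<^sub>a\<close> is at most \<open>k(n-k+1) \<sigma>\<^sub>k\<^sub>-\<^sub>1(\<lambda>) / n\<close>: expanding \<open>\<sigma>\<^sub>j(\<lambda>) = \<lambda>\<^sub>a \<sigma>\<^sub>j\<^sub>-\<^sub>1(\<lambda>|a) + \<sigma>\<^sub>j(\<lambda>|a)\<close>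
  for \<open>j = k-1, k\<close>, this follows from Newton's inequality for \<open>\<lambda>|a\<close>. Newton's inequality is proved by
  induction on the number of variables: the roots of the derivative of \<open>\<Prod>\<^sub>i (x + \<lambda>\<^sub>i)\<close> are real by
  Rolle's theorem and have proportional elementary symmetric functions, and with \<open>r + 1\<close> variables the
  inequality is Cauchy-Schwarz for the reciprocals.\<close>

definition esym_on :: "'i set \<Rightarrow> ('i \<Rightarrow> 'a::comm_semiring_1) \<Rightarrow> nat \<Rightarrow> 'a" where
  "esym_on I f j = (\<Sum>S \<in> {S. S \<subseteq> I \<and> card S = j}. \<Prod>i\<in>S. f i)"

lemma esym_eq_esym_on: "esym j xs = esym_on {0..<length xs} (\<lambda>i. xs ! i) j"
  unfolding esym_def esym_on_def by simp

lemma esym_on_0 [simp]: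
  assumes "finite I" shows "esym_on I f 0 = 1"
proof -
  have "{S. S \<subseteq> I \<and> card S = 0} = {{}}"
  proof (rule Set.set_eqI)
    fix S show "S \<in> {S. S \<subseteq> I \<and> card S = 0} \<longleftrightarrow> S \<in> {{}}"
      using rev_finite_subset[OF assms, of S] by auto
  qed
  then show ?thesis unfolding esym_on_def by simp
qed

lemma esym_on_eq_0:
  assumes "finite I" and "card I < j" shows "esym_on I f j = 0"
proof -
  have "{S. S \<subseteq> I \<and> card S = j} = {}"
  proof (rule Set.set_eqI)
    fix S show "S \<in> {S. S \<subseteq> I \<and> card S = j} \<longleftrightarrow> S \<in> {}"
      using card_mono[OF assms(1), of S] assms(2) by auto
  qed
  then show ?thesis unfolding esym_on_def by (simp only: sum.empty)
qed

lemma esym_on_card: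
  assumes "finite I" shows "esym_on I f (card I) = (\<Prod>i\<in>I. f i)"
proof -
  have "{S. S \<subseteq> I \<and> card S = card I} = {I}"
  proof (rule Set.set_eqI)
    fix S show "S \<in> {S. S \<subseteq> I \<and> card S = card I} \<longleftrightarrow> S \<in> {I}"
      using card_subset_eq[OF assms, of S] by auto
  qed
  then show ?thesis unfolding esym_on_def by simp
qed

lemma subsets_card_Suc_insert:
  assumes I: "finite I" and a: "a \<notin> I"
  shows "{S. S \<subseteq> insert a I \<and> card S = Suc j}
    = {S. S \<subseteq> I \<and> card S = Suc j} \<union> insert a ` {S. S \<subseteq> I \<and> card S = j}"
    (is "_ = ?A \<union> insert a ` ?B")
proof (rule Set.set_eqI, rule iffI)
  fix S assume S: "S \<in> {S. S \<subseteq> insert a I \<and> card S = Suc j}"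
  then have Ss: "S \<subseteq> insert a I" and Sc: "card S = Suc j" by auto
  have fS: "finite S" using rev_finite_subset[OF finite_insert[THEN iffD2, OF I] Ss] .
  show "S \<in> ?A \<union> insert a ` ?B"
  proof (cases "a \<in> S")
    case True
    then have "S = insert a (S - {a})" by auto
    moreover have "S - {a} \<in> ?B" using Ss Sc True fS by (auto simp: card_Diff_singleton_if)
    ultimately show ?thesis by blast
  next
    case False then show ?thesis using Ss Sc by auto
  qed
next
  fix S assume S: "S \<in> ?A \<union> insert a ` ?B"
  show "S \<in> {S. S \<subseteq> insert a I \<and> card S = Suc j}"
  proof (cases "S \<in> ?A")
    case True then show ?thesis by auto
  next
    case False
    then obtain T where T: "T \<in> ?B" "S = insert a T" using S by auto
    have "finite T" using rev_finite_subset[OF I] T by auto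
    moreover have "a \<notin> T" using T a by auto
    ultimately show ?thesis using T by auto
  qed
qed

lemma esym_on_insert:
  assumes I: "finite I" and a: "a \<notin> I"
  shows "esym_on (insert a I) f (Suc j) = f a * esym_on I f j + esym_on I f (Suc j)"
proof -
  let ?A = "{S. S \<subseteq> I \<and> card S = Suc j}"
  let ?B = "{S. S \<subseteq> I \<and> card S = j}"
  have disj: "?A \<inter> insert a ` ?B = {}" using a by auto
  have inj: "inj_on (insert a) ?B"
  proof (rule inj_onI)
    fix x y assume "x \<in> ?B" "y \<in> ?B" "insert a x = insert a y"
    then have "insert a x - {a} = insert a y - {a}" "a \<notin> x" "a \<notin> y" using a by auto
    then show "x = y" by simp
  qed
  have finA: "finite ?A" using I by simp
  have finB: "finite ?B" using I by simp
  have "esym_on (insert a I) f (Suc j) = (\<Sum>S\<in>?A. \<Prod>i\<in>S. f i) + (\<Sum>S\<in>insert a ` ?B. \<Prod>i\<in>S. f i)"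
    unfolding esym_on_def subsets_card_Suc_insert[OF I a]
    by (rule sum.union_disjoint) (use finA finB disj in auto)
  also have "(\<Sum>S\<in>insert a ` ?B. \<Prod>i\<in>S. f i) = (\<Sum>S\<in>?B. \<Prod>i\<in>insert a S. f i)"
    by (rule sum.reindex[OF inj, unfolded comp_def])
  also have "\<dots> = (\<Sum>S\<in>?B. f a * (\<Prod>i\<in>S. f i))"
  proof (rule sum.cong[OF refl])
    fix S assume "S \<in> ?B"
    then have "finite S" "a \<notin> S" using rev_finite_subset[OF I] a by auto
    then show "(\<Prod>i\<in>insert a S. f i) = f a * (\<Prod>i\<in>S. f i)" by simp
  qed
  also have "\<dots> = f a * esym_on I f j" unfolding esym_on_def by (simp add: sum_distrib_left)
  finally show ?thesis unfolding esym_on_def by (simp add: add.commute)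
qed

lemma esym_on_remove:
  assumes "finite I" and "a \<in> I"
  shows "esym_on I f (Suc j) = f a * esym_on (I - {a}) f j + esym_on (I - {a}) f (Suc j)"
  using esym_on_insert[of "I - {a}" a f j] assms by (simp add: insert_absorb)

lemma esym_on_reindex:
  assumes h: "inj_on h I"
  shows "esym_on (h ` I) f j = esym_on I (f \<circ> h) j"
proof -
  have card_image_sub: "card (h ` T) = card T" if "T \<subseteq> I" for T
    using card_image[OF inj_on_subset[OF h that]] .
  have "{S. S \<subseteq> h ` I \<and> card S = j} = image h ` {T. T \<subseteq> I \<and> card T = j}"
    by (auto simp: subset_image_iff card_image_sub image_iff)
  moreover have "inj_on (image h) {T. T \<subseteq> I \<and> card T = j}"
    using inj_on_image_Pow[OF h] by (rule inj_on_subset) auto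
  moreover have "(\<Prod>i\<in>h ` T. f i) = (\<Prod>i\<in>T. f (h i))" if "T \<subseteq> I" for T
    using prod.reindex[OF inj_on_subset[OF h that]] by simp
  ultimately show ?thesis
    unfolding esym_on_def by (simp add: sum.reindex)
qed

lemma esym_on_1:
  assumes "finite I" shows "esym_on I f 1 = (\<Sum>i\<in>I. f i)"
  using assms by (induction I rule: finite_induct) (simp_all add: esym_on_eq_0 esym_on_insert[of _ _ _ 0, simplified])

lemma esym_on_2:
  fixes f :: "'i \<Rightarrow> 'a::comm_ring_1"
  assumes "finite I" shows "2 * esym_on I f 2 = (\<Sum>i\<in>I. f i)^2 - (\<Sum>i\<in>I. (f i)^2)"
  using assms
proof (induction I rule: finite_induct)
  case (insert b I)
  then show ?case
    using esym_on_insert[OF insert(1,2), of f 1] esym_on_1[OF insert(1), of f]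
    by (simp add: numeral_2_eq_2 power2_eq_square algebra_simps)
qed (simp add: esym_on_eq_0)

text \<open>This identity is why the Newton transformation has the eigenvalues \<open>\<sigma>\<^sub>k\<^sub>-\<^sub>1(\<lambda>|a)\<close>.\<close>
lemma esym_on_remove_expansion:
  fixes f :: "'i \<Rightarrow> 'a::comm_ring_1"
  assumes "finite I" and "a \<in> I"
  shows "(\<Sum>i<Suc k. (-1)^i * esym_on I f (k - i) * f a ^ i) = esym_on (I - {a}) f k"
proof (induction k)
  case (Suc k)
  have "(\<Sum>i<Suc (Suc k). (-1)^i * esym_on I f (Suc k - i) * f a ^ i)
      = esym_on I f (Suc k) + (\<Sum>i<Suc k. (-1)^(Suc i) * esym_on I f (k - i) * f a ^ Suc i)"
    by (subst sum.lessThan_Suc_shift) simp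
  also have "(\<Sum>i<Suc k. (-1)^(Suc i) * esym_on I f (k - i) * f a ^ Suc i)
      = - f a * (\<Sum>i<Suc k. (-1)^i * esym_on I f (k - i) * f a ^ i)"
    by (simp add: sum_distrib_left algebra_simps)
  finally show ?case using Suc esym_on_remove[OF assms, of f k] by simp
qed (use assms in simp)

lemma sum_esym_on_remove:
  fixes f :: "'i \<Rightarrow> 'a::comm_ring_1"
  assumes "finite I"
  shows "(\<Sum>a\<in>I. esym_on (I - {a}) f j) = (of_nat (card I) - of_nat j) * esym_on I f j"
  using assms
proof (induction I arbitrary: j rule: finite_induct)
  case empty
  then show ?case by (cases j) (auto simp: esym_on_eq_0)
next
  case (insert b I)
  have remove: "insert b I - {a} = insert b (I - {a})" if "a \<in> I" for a
    using that insert by auto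
  have "(\<Sum>a\<in>insert b I. esym_on (insert b I - {a}) f j)
      = esym_on I f j + (\<Sum>a\<in>I. esym_on (insert b (I - {a})) f j)"
    using insert by (simp add: remove)
  also have "\<dots> = (of_nat (card (insert b I)) - of_nat j) * esym_on (insert b I) f j"
  proof (cases j)
    case (Suc j')
    have "(\<Sum>a\<in>I. esym_on (insert b (I - {a})) f j)
        = (\<Sum>a\<in>I. f b * esym_on (I - {a}) f j' + esym_on (I - {a}) f j)"
      unfolding Suc using insert by (intro sum.cong refl esym_on_insert) auto
    then show ?thesis
      using insert unfolding Suc
      by (simp add: esym_on_insert sum.distrib flip: sum_distrib_left) (simp add: algebra_simps)
  qed (use insert in simp)
  finally show ?case .
qed

lemma esym_on_complement:
  fixes f :: "'i \<Rightarrow> 'a::field"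
  assumes I: "finite I" and nz: "\<And>i. i \<in> I \<Longrightarrow> f i \<noteq> 0" and j: "j \<le> card I"
  shows "esym_on I f (card I - j) = (\<Prod>i\<in>I. f i) * esym_on I (\<lambda>i. 1 / f i) j"
proof -
  have "esym_on I (\<lambda>i. 1 / f i) j * (\<Prod>i\<in>I. f i)
      = (\<Sum>S\<in>{S. S \<subseteq> I \<and> card S = j}. (\<Prod>i\<in>S. 1 / f i) * (\<Prod>i\<in>I. f i))"
    unfolding esym_on_def by (simp add: sum_distrib_right)
  also have "\<dots> = esym_on I f (card I - j)"
    unfolding esym_on_def
  proof (rule sum.reindex_bij_witness[of _ "\<lambda>S. I - S" "\<lambda>S. I - S"])
    fix S assume "S \<in> {S. S \<subseteq> I \<and> card S = j}"
    then have S: "S \<subseteq> I" "card S = j" "finite S" using rev_finite_subset[OF I] by auto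
    show "I - (I - S) = S" using S by auto
    show "I - S \<in> {S. S \<subseteq> I \<and> card S = card I - j}" using S by (simp add: card_Diff_subset)
    have "(\<Prod>i\<in>S. f i) \<noteq> 0" using nz S by (simp add: prod_zero_iff subset_iff)
    then show "(\<Prod>i\<in>I - S. f i) = (\<Prod>i\<in>S. 1 / f i) * (\<Prod>i\<in>I. f i)"
      using prod.subset_diff[OF S(1) I, of f] by (simp add: prod_dividef)
  next
    fix S assume "S \<in> {S. S \<subseteq> I \<and> card S = card I - j}"
    then have S: "S \<subseteq> I" "card S = card I - j" by auto
    show "I - (I - S) = S" using S by auto
    show "I - S \<in> {S. S \<subseteq> I \<and> card S = j}"
      using S j card_Diff_subset[OF rev_finite_subset[OF I S(1)] S(1)] by auto
  qed
  finally show ?thesis by (simp add: mult.commute)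
qed

lemma coeff_prod_linear:
  fixes f :: "'i \<Rightarrow> 'a::comm_ring_1"
  assumes "finite I"
  shows "coeff (\<Prod>i\<in>I. [:f i, 1:]) t = (if t \<le> card I then esym_on I f (card I - t) else 0)"
  using assms
proof (induction I arbitrary: t rule: finite_induct)
  case empty
  then show ?case by (cases t) auto
next
  case (insert b I)
  let ?P = "\<Prod>i\<in>I. [:f i, 1:]"
  let ?c = "card I"
  have "(\<Prod>i\<in>insert b I. [:f i, 1:]) = Polynomial.smult (f b) ?P + pCons 0 ?P"
    using insert by (simp add: mult_pCons_left)
  then have eq: "coeff (\<Prod>i\<in>insert b I. [:f i, 1:]) t = f b * coeff ?P t + coeff (pCons 0 ?P) t"
    by simp
  have cI: "card (insert b I) = Suc ?c" using insert by simp
  show ?case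
  proof (cases t)
    case 0
    then show ?thesis
      using eq insert esym_on_insert[OF insert(1,2), of f ?c] esym_on_eq_0[OF insert(1), of "Suc ?c" f]
      by (simp add: cI)
  next
    case (Suc t')
    consider "t' > ?c" | "t' = ?c" | "t' < ?c" by linarith
    then show ?thesis
    proof cases
      case 3
      then have "?c - t' = Suc (?c - Suc t')" by simp
      then show ?thesis using eq insert Suc cI 3 esym_on_insert[OF insert(1,2), of f "?c - Suc t'"]
        by simp
    qed (use eq insert Suc cI in auto)
  qed
qed

lemma degree_prod_linear:
  fixes f :: "'i \<Rightarrow> 'a::comm_ring_1"
  assumes "finite I"
  shows "degree (\<Prod>i\<in>I. [:f i, 1:]) = card I"
proof (rule antisym)
  show "degree (\<Prod>i\<in>I. [:f i, 1:]) \<le> card I"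
    by (rule degree_le) (auto simp: coeff_prod_linear[OF assms])
  show "card I \<le> degree (\<Prod>i\<in>I. [:f i, 1:])"
    by (rule le_degree) (simp add: coeff_prod_linear[OF assms] assms)
qed

text \<open>A nonzero polynomial is real-rooted if the multiplicities of its real roots add up to its degree
  (the reverse inequality always holds, see \<open>sum_order_le_degree\<close>).\<close>
definition real_rooted :: "real poly \<Rightarrow> bool" where
  "real_rooted p \<longleftrightarrow> p = 0 \<or> degree p \<le> (\<Sum>x | poly p x = 0. order x p)"

lemma sum_order_roots_superset:
  fixes p :: "real poly"
  assumes "p \<noteq> 0" and "finite R" and "{x. poly p x = 0} \<subseteq> R"
  shows "(\<Sum>x\<in>R. order x p) = (\<Sum>x | poly p x = 0. order x p)"
  by (rule sum.mono_neutral_right[OF assms(2,3)]) (use order_0I in blast)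

lemma order_linear: "order y [:-x, 1::real:] = (if y = x then 1 else 0)"
  using order_power_n_n[of x 1] by (auto intro!: order_0I)

lemma real_rooted_mult:
  assumes "real_rooted p" "real_rooted q" shows "real_rooted (p * q)"
proof (cases "p = 0 \<or> q = 0")
  case True then show ?thesis by (auto simp: real_rooted_def)
next
  case False
  then have p: "p \<noteq> 0" and q: "q \<noteq> 0" by auto
  let ?R = "{x. poly (p * q) x = 0}"
  have fR: "finite ?R" using p q by (intro poly_roots_finite) simp
  have "(\<Sum>x\<in>?R. order x (p * q)) = (\<Sum>x\<in>?R. order x p) + (\<Sum>x\<in>?R. order x q)"
    using p q by (simp add: order_mult sum.distrib)
  also have "(\<Sum>x\<in>?R. order x p) = (\<Sum>x | poly p x = 0. order x p)"
    by (rule sum_order_roots_superset[OF p fR]) auto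
  also have "(\<Sum>x\<in>?R. order x q) = (\<Sum>x | poly q x = 0. order x q)"
    by (rule sum_order_roots_superset[OF q fR]) auto
  finally have "degree (p * q) \<le> (\<Sum>x\<in>?R. order x (p * q))"
    using assms p q by (simp add: real_rooted_def degree_mult_eq)
  then show ?thesis unfolding real_rooted_def by simp
qed

lemma real_rooted_linear: "real_rooted [:z, 1:]"
proof -
  have "{x. poly [:z, 1:] x = 0} = {-z}" by auto
  moreover have "order (-z) [:z, 1:] = 1" using order_linear[of "-z" "-z"] by simp
  ultimately show ?thesis unfolding real_rooted_def by simp
qed

lemma real_rooted_prod_linear: "finite I \<Longrightarrow> real_rooted (\<Prod>i\<in>I. [:f i, 1:])"
proof (induction I rule: finite_induct)
  case (insert b I)
  then show ?case
    by (simp only: prod.insert[OF insert(1,2)]) (intro real_rooted_mult real_rooted_linear)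
qed (simp add: real_rooted_def)

lemma real_rooted_factorization:
  fixes p :: "real poly"
  assumes "p \<noteq> 0" "real_rooted p"
  shows "\<exists>(N::nat) g. p = Polynomial.smult (lead_coeff p) (\<Prod>i<N. [:g i, 1:])"
  using assms
proof (induction "degree p" arbitrary: p rule: less_induct)
  case (less p)
  show ?case
  proof (cases "\<exists>x. poly p x = 0")
    case False
    then have "degree p = 0" using less.prems by (simp add: real_rooted_def)
    then have "p = Polynomial.smult (lead_coeff p) (\<Prod>i<0::nat. [:0, 1:])"
      using degree_0_id[of p] by (simp add: lessThan_0)
    then show ?thesis by (rule_tac x=0 in exI, rule_tac x="\<lambda>_. 0" in exI)
  next
    case True
    then obtain x where x: "poly p x = 0" by auto
    then obtain q where pq: "p = [:-x, 1:] * q" by (metis dvd_def poly_eq_0_iff_dvd)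
    have q: "q \<noteq> 0" using pq less.prems by auto
    have "degree ([:-x, 1:] * q) = degree [:-x, 1::real:] + degree q"
      by (rule degree_mult_eq) (use q in auto)
    then have degp: "degree p = Suc (degree q)" using pq by simp
    have ordp: "order y p = (if y = x then 1 else 0) + order y q" for y
    proof -
      have "order y ([:-x, 1:] * q) = order y [:-x, 1:] + order y q"
        by (rule order_mult) (use q in \<open>metis mult_eq_0_iff pCons_eq_0_iff zero_neq_one\<close>)
      then show ?thesis unfolding order_linear pq .
    qed
    let ?R = "{y. poly p y = 0}"
    have fR: "finite ?R" using less.prems by (intro poly_roots_finite) simp
    have "(\<Sum>y\<in>?R. order y p) = 1 + (\<Sum>y\<in>?R. order y q)"
      using x fR by (simp add: ordp sum.distrib)
    also have "(\<Sum>y\<in>?R. order y q) = (\<Sum>y | poly q y = 0. order y q)"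
      by (rule sum_order_roots_superset[OF q fR]) (auto simp: pq)
    finally have "real_rooted q"
      using less.prems degp by (simp add: real_rooted_def)
    then obtain N :: nat and g where g: "q = Polynomial.smult (lead_coeff q) (\<Prod>i<N. [:g i, 1:])"
      using less.hyps[of q] q degp by auto
    let ?g = "g(N := -x)"
    have "p = [:-x, 1:] * Polynomial.smult (lead_coeff q) (\<Prod>i<N. [:g i, 1:])"
      using pq g by metis
    also have "\<dots> = Polynomial.smult (lead_coeff q) ((\<Prod>i<N. [:g i, 1:]) * [:-x, 1:])"
      by (simp add: mult.commute)
    also have "(\<Prod>i<N. [:g i, 1:]) * [:-x, 1:] = (\<Prod>i<Suc N. [:?g i, 1:])"
      by (simp add: prod.lessThan_Suc)
    also have "lead_coeff q = lead_coeff p"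
      unfolding pq lead_coeff_mult by simp
    finally have "p = Polynomial.smult (lead_coeff p) (\<Prod>i<Suc N. [:?g i, 1:])" .
    then show ?thesis by blast
  qed
qed

text \<open>Rolle: a root of \<open>pderiv p\<close> lies strictly between any two consecutive points of \<open>S\<close>.\<close>
lemma pderiv_roots_between:
  fixes p :: "real poly"
  assumes "finite S" and "\<And>x. x \<in> S \<Longrightarrow> poly p x = 0"
  shows "\<exists>B. finite B \<and> card B = card S - 1 \<and> S \<inter> B = {} \<and> (\<forall>y\<in>B. y < Max S)
    \<and> (\<forall>y\<in>B. poly (pderiv p) y = 0)"
  using assms
proof (induction S rule: finite_linorder_max_induct)
  case empty
  then show ?case by (intro exI[of _ "{}"]) simp
next
  case (insert b S)
  show ?case
  proof (cases "S = {}")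
    case True
    then show ?thesis by (intro exI[of _ "{}"]) simp
  next
    case False
    obtain B where B: "finite B" "card B = card S - 1" "S \<inter> B = {}" "\<forall>y\<in>B. y < Max S"
      "\<forall>y\<in>B. poly (pderiv p) y = 0"
      using insert by auto
    have max: "Max S \<in> S" "Max S < b" "Max (insert b S) = b"
      using insert False by (auto intro: Max_insert2 less_imp_le)
    then obtain y where y: "Max S < y" "y < b" "poly p b - poly p (Max S) = (b - Max S) * poly (pderiv p) y"
      using poly_MVT[of "Max S" b p] by blast
    then have "poly (pderiv p) y = 0" using insert.prems max by simp
    moreover have "y \<notin> insert b S" "y \<notin> B" using y B(4) insert.hyps(1) by (auto dest: Max_ge)
    moreover have "\<forall>z\<in>B. z < b" using B(4) max by auto
    ultimately show ?thesis
      using B insert.hyps(1,2) False max y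
      by (intro exI[of _ "insert y B"]) (auto simp: card_insert_if card_gt_0_iff)
  qed
qed

lemma real_rooted_pderiv:
  assumes "real_rooted p" shows "real_rooted (pderiv p)"
proof (cases "degree p = 0")
  case True then show ?thesis by (simp add: real_rooted_def pderiv_eq_0_iff)
next
  case False
  then have p: "p \<noteq> 0" and p': "pderiv p \<noteq> 0" by (auto simp: pderiv_eq_0_iff)
  let ?p' = "pderiv p"
  define R where "R = {x. poly p x = 0}"
  let ?R' = "{x. poly ?p' x = 0}"
  have fR: "finite R" unfolding R_def using p by (intro poly_roots_finite)
  have fR': "finite ?R'" using p' by (intro poly_roots_finite)
  have dp: "degree p \<le> (\<Sum>x\<in>R. order x p)" using assms p unfolding real_rooted_def R_def by simp
  obtain B where fB: "finite B" and cB: "card B = card R - 1" and disj: "R \<inter> B = {}"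
    and Broots: "\<forall>x\<in>B. poly ?p' x = 0"
    using pderiv_roots_between[OF fR, of p] unfolding R_def by auto
  have "(\<Sum>x\<in>R. order x ?p') + (\<Sum>x\<in>B. order x ?p') = (\<Sum>x\<in>R \<union> B. order x ?p')"
    using fR fB disj by (simp add: sum.union_disjoint)
  also have "\<dots> \<le> (\<Sum>x\<in>?R' \<union> R. order x ?p')"
    by (rule sum_mono2) (use fR fR' Broots in auto)
  also have "\<dots> = (\<Sum>x\<in>?R'. order x ?p')"
    by (rule sum_order_roots_superset[OF p']) (use fR fR' in auto)
  finally have s1: "(\<Sum>x\<in>R. order x ?p') + (\<Sum>x\<in>B. order x ?p') \<le> (\<Sum>x\<in>?R'. order x ?p')" .
  have "card B \<le> (\<Sum>x\<in>B. order x ?p')"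
    using card_eq_sum[of B] sum_mono[of B "\<lambda>_. 1::nat" "\<lambda>x. order x ?p'"] Broots p'
    by (simp add: Suc_le_eq order_root)
  moreover have "(\<Sum>x\<in>R. order x p) = (\<Sum>x\<in>R. order x ?p') + card R"
    using order_pderiv[OF p] by (simp add: R_def sum_Suc)
  moreover have "R \<noteq> {}" using dp False by auto
  then have "card R \<ge> 1" using fR by (simp add: Suc_le_eq card_gt_0_iff)
  ultimately have "degree ?p' \<le> (\<Sum>x\<in>?R'. order x ?p')"
    using s1 cB dp degree_pderiv[of p] by linarith
  then show ?thesis unfolding real_rooted_def by simp
qed

text \<open>The derivative of \<open>\<Prod>i\<in>I. [:f i, 1:]\<close> is real-rooted of degree \<open>m - 1\<close>; comparing its
  coefficients with those of the product relates the two families of elementary symmetric functions.\<close>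
lemma esym_on_pderiv_reduction:
  fixes f :: "'i \<Rightarrow> real"
  assumes I: "finite I" and m: "card I = m" and m2: "m \<ge> 2"
  obtains g :: "nat \<Rightarrow> real"
  where "\<And>j. j \<le> m - 1 \<Longrightarrow> real m * esym_on {..<m - 1} g j = (real m - real j) * esym_on I f j"
proof -
  define P where "P = (\<Prod>i\<in>I. [:f i, 1:])"
  have cP: "coeff P t = (if t \<le> m then esym_on I f (m - t) else 0)" for t
    unfolding P_def using coeff_prod_linear[OF I, of f t] m by simp
  have degP': "degree (pderiv P) = m - 1"
    unfolding P_def using degree_prod_linear[OF I, of f] m by (simp add: degree_pderiv)
  have lc: "lead_coeff (pderiv P) = real m"
    unfolding degP' coeff_pderiv using m2 cP[of m] I by simp
  have "pderiv P \<noteq> 0" using lc m2 by auto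
  moreover have "real_rooted (pderiv P)"
    unfolding P_def by (intro real_rooted_pderiv real_rooted_prod_linear I)
  ultimately obtain N :: nat and g :: "nat \<Rightarrow> real"
    where "pderiv P = Polynomial.smult (lead_coeff (pderiv P)) (\<Prod>i<N. [:g i, 1:])"
    using real_rooted_factorization by blast
  then have P': "pderiv P = Polynomial.smult (real m) (\<Prod>i<N. [:g i, 1:])" unfolding lc .
  have N: "N = m - 1"
    using degP' m2 degree_prod_linear[of "{..<N}" g] unfolding P' by simp
  show ?thesis
  proof (rule that)
    fix j assume j: "j \<le> m - 1"
    define t where "t = m - 1 - j"
    have "coeff (pderiv P) t = real (m - j) * esym_on I f j"
      unfolding coeff_pderiv cP using j m2 by (simp add: t_def Suc_diff_Suc)
    moreover have "coeff (pderiv P) t = real m * esym_on {..<m - 1} g j"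
      unfolding P' coeff_smult coeff_prod_linear[OF finite_lessThan] using j N m2 by (simp add: t_def)
    ultimately show "real m * esym_on {..<m - 1} g j = (real m - real j) * esym_on I f j"
      using j m2 by (simp add: of_nat_diff)
  qed
qed

lemma sum_squared_le_card_mult_sum_squares:
  fixes w :: "'i \<Rightarrow> real"
  shows "(\<Sum>i\<in>I. w i)^2 \<le> real (card I) * (\<Sum>i\<in>I. (w i)^2)"
proof -
  have "0 \<le> (\<Sum>i\<in>I. \<Sum>j\<in>I. (w i - w j)^2)" by (intro sum_nonneg) auto
  also have "\<dots> = (\<Sum>i\<in>I. \<Sum>j\<in>I. (w i)^2 + (w j)^2 - 2 * w i * w j)"
    by (simp add: power2_diff)
  also have "\<dots> = (\<Sum>i\<in>I. \<Sum>j\<in>I. (w i)^2) + (\<Sum>i\<in>I. \<Sum>j\<in>I. (w j)^2) - (\<Sum>i\<in>I. \<Sum>j\<in>I. 2 * w i * w j)"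
    by (simp add: sum.distrib sum_subtractf)
  also have "(\<Sum>i\<in>I. \<Sum>j\<in>I. (w i)^2) = real (card I) * (\<Sum>i\<in>I. (w i)^2)"
    by (simp add: sum_distrib_left mult.commute)
  also have "(\<Sum>i\<in>I. \<Sum>j\<in>I. (w j)^2) = real (card I) * (\<Sum>i\<in>I. (w i)^2)"
    by simp
  also have "(\<Sum>i\<in>I. \<Sum>j\<in>I. 2 * w i * w j) = 2 * (\<Sum>i\<in>I. w i)^2"
  proof -
    have "(\<Sum>i\<in>I. \<Sum>j\<in>I. 2 * w i * w j) = (\<Sum>i\<in>I. (2 * w i) * (\<Sum>j\<in>I. w j))"
      by (simp add: sum_distrib_left)
    also have "\<dots> = (\<Sum>i\<in>I. 2 * w i) * (\<Sum>j\<in>I. w j)" by (simp add: sum_distrib_right)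
    also have "\<dots> = 2 * (\<Sum>i\<in>I. w i)^2" by (simp add: sum_distrib_left[symmetric] power2_eq_square)
    finally show ?thesis .
  qed
  finally show ?thesis by simp
qed

text \<open>With \<open>card I = r + 1\<close> and nonzero entries, complementation turns \<open>e\<^sub>r\<close> and \<open>e\<^sub>r\<^sub>-\<^sub>1\<close> into the first
  two elementary symmetric functions of the reciprocals, and the inequality becomes Cauchy-Schwarz.\<close>
lemma newton_inequality_card_Suc:
  fixes f :: "'i \<Rightarrow> real"
  assumes I: "finite I" and c: "card I = Suc r" and r: "r \<ge> 1"
  shows "(real r + 1) * 2 * esym_on I f (r - 1) * esym_on I f (Suc r) \<le> real r * (esym_on I f r)^2"
proof (cases "\<exists>i\<in>I. f i = 0")
  case True
  then have "esym_on I f (Suc r) = 0" using esym_on_card[OF I, of f] c I by (simp add: prod_zero_iff)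
  then show ?thesis by simp
next
  case False
  define w where "w i = 1 / f i" for i
  define P where "P = (\<Prod>i\<in>I. f i)"
  define s where "s = (\<Sum>i\<in>I. w i)"
  define q where "q = (\<Sum>i\<in>I. (w i)^2)"
  have e_r: "esym_on I f r = P * s"
    using esym_on_complement[OF I, of f 1] False c esym_on_1[OF I, of w]
    unfolding P_def s_def w_def by auto
  have "esym_on I f (r - 1) = P * esym_on I w 2"
    using esym_on_complement[OF I, of f 2] False c r unfolding P_def w_def by (auto simp: numeral_2_eq_2)
  moreover have "2 * esym_on I w 2 = s^2 - q"
    using esym_on_2[OF I, of w] unfolding s_def q_def .
  ultimately have e_r_minus_1: "esym_on I f (r - 1) = P * (s^2 - q) / 2" by simp
  have e_Suc_r: "esym_on I f (Suc r) = P" using esym_on_card[OF I, of f] c unfolding P_def by simp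
  have "s^2 \<le> (real r + 1) * q"
    using sum_squared_le_card_mult_sum_squares[of w I] c unfolding s_def q_def by (simp add: add.commute)
  then have "0 \<le> P^2 * ((real r + 1) * q - s^2)" by simp
  also have "\<dots> = real r * (esym_on I f r)^2 - (real r + 1) * 2 * esym_on I f (r - 1) * esym_on I f (Suc r)"
    unfolding e_r e_r_minus_1 e_Suc_r by (simp add: power2_eq_square field_simps)
  finally show ?thesis by simp
qed

lemma newton_inequality_rescale:
  fixes M R a b c a' b' c' :: real
  assumes a': "M * a' = (M - R + 1) * a" and b': "M * b' = (M - R) * b" and c': "M * c' = (M - R - 1) * c"
    and pos: "M - R - 1 > 0"
    and ineq: "(R + 1) * (M - R) * a' * c' \<le> R * (M - R - 1) * b'^2"
  shows "(R + 1) * (M - R + 1) * a * c \<le> R * (M - R) * b^2"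
proof -
  have "((M - R) * (M - R - 1)) * ((R + 1) * (M - R + 1) * a * c)
      = (R + 1) * (M - R) * ((M * a') * (M * c'))"
    unfolding a' c' by (simp add: algebra_simps)
  also have "\<dots> = M^2 * ((R + 1) * (M - R) * a' * c')"
    by (simp add: power2_eq_square algebra_simps)
  also have "\<dots> \<le> M^2 * (R * (M - R - 1) * b'^2)"
    using ineq by (simp add: mult_left_mono)
  also have "\<dots> = R * (M - R - 1) * ((M * b') * (M * b'))"
    by (simp add: power2_eq_square algebra_simps)
  also have "\<dots> = ((M - R) * (M - R - 1)) * (R * (M - R) * b^2)"
    unfolding b' by (simp add: power2_eq_square algebra_simps)
  finally show ?thesis
    using pos by (simp add: mult_le_cancel_left_pos)
qed

lemma newton_inequality_nat:
  fixes I :: "nat set" and f :: "nat \<Rightarrow> real"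
  assumes "finite I" and "1 \<le> r" and "r < card I"
  shows "(real r + 1) * (real (card I) - real r + 1) * esym_on I f (r - 1) * esym_on I f (Suc r)
         \<le> real r * (real (card I) - real r) * (esym_on I f r)^2"
  using assms
proof (induction "card I" arbitrary: I f rule: less_induct)
  case (less I f)
  define m where "m = card I"
  show ?case
  proof (cases "Suc r = m")
    case True
    then have cI: "real (card I) = real r + 1" using m_def by simp
    have "(real r + 1) * 2 * esym_on I f (r - 1) * esym_on I f (Suc r) \<le> real r * (esym_on I f r)^2"
      using newton_inequality_card_Suc[OF less.prems(1), of r f] True less.prems m_def by simp
    then show ?thesis unfolding cI by (simp add: algebra_simps)
  next
    case False
    then have m: "Suc r < m" "m \<ge> 2" using less.prems m_def by auto
    obtain g :: "nat \<Rightarrow> real" where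
      g: "\<And>j. j \<le> m - 1 \<Longrightarrow> real m * esym_on {..<m - 1} g j = (real m - real j) * esym_on I f j"
      using esym_on_pderiv_reduction[OF less.prems(1) m_def[symmetric] m(2)] by blast
    have IH: "(real r + 1) * (real (m - 1) - real r + 1) * esym_on {..<m - 1} g (r - 1) * esym_on {..<m - 1} g (Suc r)
         \<le> real r * (real (m - 1) - real r) * (esym_on {..<m - 1} g r)^2"
      using less.hyps[of "{..<m - 1}" g] m m_def less.prems by simp
    show ?thesis
      unfolding m_def[symmetric]
    proof (rule newton_inequality_rescale)
      show "real m * esym_on {..<m - 1} g (r - 1) = (real m - real r + 1) * esym_on I f (r - 1)"
        using g[of "r - 1"] m less.prems by (simp add: of_nat_diff)
      show "real m * esym_on {..<m - 1} g r = (real m - real r) * esym_on I f r"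
        using g[of r] m by simp
      show "real m * esym_on {..<m - 1} g (Suc r) = (real m - real r - 1) * esym_on I f (Suc r)"
        using g[of "Suc r"] m by simp
      show "real m - real r - 1 > 0" using m by simp
      show "(real r + 1) * (real m - real r) * esym_on {..<m - 1} g (r - 1) * esym_on {..<m - 1} g (Suc r)
          \<le> real r * (real m - real r - 1) * (esym_on {..<m - 1} g r)\<^sup>2"
        using IH m by (simp add: of_nat_diff algebra_simps)
    qed
  qed
qed

theorem newton_inequality:
  fixes f :: "'i \<Rightarrow> real"
  assumes I: "finite I" and "1 \<le> r" and "r < card I"
  shows "(real r + 1) * (real (card I) - real r + 1) * esym_on I f (r - 1) * esym_on I f (Suc r)
         \<le> real r * (real (card I) - real r) * (esym_on I f r)^2"
proof -
  obtain h where h: "bij_betw h {0..<card I} I" using ex_bij_betw_nat_finite[OF I] by blast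
  then have "esym_on I f j = esym_on {0..<card I} (f \<circ> h) j" for j
    by (metis bij_betw_def esym_on_reindex)
  then show ?thesis using newton_inequality_nat[of "{0..<card I}" r "f \<circ> h"] assms by simp
qed

corollary newton_inequality_simple:
  fixes f :: "'i \<Rightarrow> real"
  assumes I: "finite I" and r: "1 \<le> r"
  shows "esym_on I f (r - 1) * esym_on I f (Suc r) \<le> (esym_on I f r)^2"
proof (cases "r < card I")
  case True
  define \<alpha> where "\<alpha> = (real r + 1) * (real (card I) - real r + 1)"
  define \<beta> where "\<beta> = real r * (real (card I) - real r)"
  have "\<alpha> * (esym_on I f (r - 1) * esym_on I f (Suc r)) \<le> \<beta> * (esym_on I f r)^2"
    using newton_inequality[OF I r True, of f] unfolding \<alpha>_def \<beta>_def by (simp add: mult.assoc)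
  also have "\<dots> \<le> \<alpha> * (esym_on I f r)^2"
    using True unfolding \<alpha>_def \<beta>_def by (intro mult_right_mono mult_mono) auto
  finally show ?thesis
    using True unfolding \<alpha>_def by (simp add: mult_le_cancel_left_pos)
next
  case False
  then have "esym_on I f (Suc r) = 0" using I by (intro esym_on_eq_0) auto
  then show ?thesis by simp
qed

lemma esym_on_remove_pos:
  fixes f :: "'i \<Rightarrow> real"
  assumes I: "finite I" and a: "a \<in> I" and pos: "\<And>j. 1 \<le> j \<Longrightarrow> j \<le> k \<Longrightarrow> esym_on I f j > 0"
    and "j < k"
  shows "esym_on (I - {a}) f j > 0"
  using \<open>j < k\<close>
proof (induction j)
  case 0
  then show ?case using I by simp
next
  case (Suc j)
  define x A B C where "x = f a" and "A = esym_on (I - {a}) f j"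
    and "B = esym_on (I - {a}) f (Suc j)" and "C = esym_on (I - {a}) f (Suc (Suc j))"
  have A: "A > 0" using Suc unfolding A_def by simp
  have e1: "x * A + B > 0"
    using pos[of "Suc j"] Suc.prems esym_on_remove[OF I a, of f j] unfolding x_def A_def B_def by simp
  have e2: "x * B + C > 0"
    using pos[of "Suc (Suc j)"] Suc.prems esym_on_remove[OF I a, of f "Suc j"]
    unfolding x_def B_def C_def by simp
  have newton: "A * C \<le> B^2"
    using newton_inequality_simple[of "I - {a}" "Suc j" f] I unfolding A_def B_def C_def by simp
  show ?case
  proof (rule ccontr)
    assume "\<not> esym_on (I - {a}) f (Suc j) > 0"
    then have B: "B \<le> 0" unfolding B_def by simp
    have "(- B) * (- B) \<le> (x * A) * (- B)" using e1 B by (intro mult_right_mono) auto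
    also have "\<dots> = A * (x * (- B))" by simp
    also have "\<dots> < A * C" using e2 A by (intro mult_strict_left_mono) auto
    finally show False using newton by (simp add: power2_eq_square)
  qed
qed

lemma esym_on_remove_le:
  fixes f :: "'i \<Rightarrow> real"
  assumes I: "finite I" and a: "a \<in> I" and k: "1 \<le> k" "2 * k \<le> card I"
    and pos: "\<And>j. 1 \<le> j \<Longrightarrow> j \<le> k \<Longrightarrow> esym_on I f j > 0"
  shows "real (card I) * esym_on (I - {a}) f (k - 1)
    \<le> real k * (real (card I) - real k + 1) * esym_on I f (k - 1)"
proof (cases "k = 1")
  case True
  then show ?thesis using I by simp
next
  case False
  define j where "j = k - 2"
  have kj: "k = Suc (Suc j)" using k False unfolding j_def by simp
  define n where "n = real (card I)"
  define \<alpha> \<beta> where "\<alpha> = real k * (n - real k + 1)" and "\<beta> = (real k - 1) * (n - real k)"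
  define x A B C where "x = f a" and "A = esym_on (I - {a}) f j"
    and "B = esym_on (I - {a}) f (Suc j)" and "C = esym_on (I - {a}) f (Suc (Suc j))"
  have A: "A > 0" unfolding A_def using esym_on_remove_pos[OF I a pos, where j=j] kj by simp
  have e1: "esym_on I f (k - 1) = x * A + B"
    using esym_on_remove[OF I a, of f j] kj unfolding x_def A_def B_def by simp
  have e1_pos: "x * A + B > 0" using pos[of "k - 1"] e1 kj by simp
  have e2_pos: "x * B + C > 0"
    using pos[of k] esym_on_remove[OF I a, of f "Suc j"] kj unfolding x_def B_def C_def by simp
  have card_remove: "real (card (I - {a})) = n - 1"
    using I a k unfolding n_def by (simp add: of_nat_diff)
  have newton: "\<alpha> * (A * C) \<le> \<beta> * B^2"
    using newton_inequality[of "I - {a}" "Suc j" f] I a k kj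
    unfolding \<alpha>_def \<beta>_def A_def B_def C_def card_remove by (simp add: algebra_simps)
  have \<alpha>\<beta>: "\<alpha> - \<beta> = n" unfolding \<alpha>_def \<beta>_def by (simp add: algebra_simps)
  have \<alpha>: "\<alpha> > 0" unfolding \<alpha>_def n_def using k by simp
  txt \<open>If \<open>\<alpha> x A + \<beta> B < 0\<close>, Newton and \<open>C > - x B\<close> force \<open>B < 0\<close>, and then \<open>x A + B > 0\<close> gives
    \<open>\<alpha> x A + \<beta> B > - n B > 0\<close>.\<close>
  have key: "0 \<le> \<alpha> * x * A + \<beta> * B"
  proof (rule ccontr)
    assume neg: "\<not> 0 \<le> \<alpha> * x * A + \<beta> * B"
    have "\<alpha> * A * C > \<alpha> * A * (- x * B)"
      using e2_pos \<alpha> A by (intro mult_strict_left_mono) auto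
    then have "B * (\<beta> * B + \<alpha> * x * A) > 0"
      using newton by (simp add: power2_eq_square algebra_simps)
    then have "B < 0" using neg by (smt (verit) mult_nonneg_nonpos)
    have "\<alpha> * (x * A) > \<alpha> * (- B)" using e1_pos \<alpha> by (intro mult_strict_left_mono) auto
    then have "\<alpha> * x * A + \<beta> * B > - n * B" using \<alpha>\<beta> by (simp add: algebra_simps)
    moreover have "- n * B \<ge> 0" using \<open>B < 0\<close> unfolding n_def by (simp add: mult_nonneg_nonpos)
    ultimately show False using neg by linarith
  qed
  have "B = esym_on (I - {a}) f (k - 1)" unfolding B_def using kj by simp
  then show ?thesis
    using key \<alpha>\<beta> unfolding e1 n_def[symmetric] \<alpha>_def[symmetric] by (simp add: algebra_simps)
qed

lemma real_symmetric_eigenvalue_real: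
  fixes E :: "real mat"
  assumes E: "E \<in> carrier_mat n n" and sym: "transpose_mat E = E"
    and ev: "eigenvalue (map_mat complex_of_real E) a"
  shows "Im a = 0"
proof -
  let ?C = "map_mat complex_of_real E"
  obtain v where "eigenvector ?C v a" using ev unfolding eigenvalue_def by blast
  then have v: "v \<in> carrier_vec n" and v0: "v \<noteq> 0\<^sub>v n" and Cv: "?C *\<^sub>v v = a \<cdot>\<^sub>v v"
    using E unfolding eigenvector_def by auto
  have Cvi: "(\<Sum>j<n. complex_of_real (E $$ (i, j)) * v $ j) = a * v $ i" if "i < n" for i
    using arg_cong[OF Cv, of "\<lambda>w. w $ i"] that E v
    by (simp add: mult_mat_vec_def scalar_prod_def row_def lessThan_atLeast0)
  define q where "q = (\<Sum>i<n. \<Sum>j<n. cnj (v $ i) * complex_of_real (E $$ (i, j)) * v $ j)"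
  define N where "N = (\<Sum>i<n. cnj (v $ i) * v $ i)"
  have "q = (\<Sum>i<n. cnj (v $ i) * (\<Sum>j<n. complex_of_real (E $$ (i, j)) * v $ j))"
    unfolding q_def by (simp add: sum_distrib_left mult.assoc)
  also have "\<dots> = (\<Sum>i<n. cnj (v $ i) * (a * v $ i))" by (rule sum.cong[OF refl]) (simp add: Cvi)
  also have "\<dots> = a * N" unfolding N_def by (simp add: sum_distrib_left algebra_simps)
  finally have qN: "q = a * N" .
  txt \<open>The Hermitian form \<open>q = v\<^sup>* E v\<close> and the squared norm \<open>N = v\<^sup>* v\<close> are real.\<close>
  have Esym: "E $$ (i, j) = E $$ (j, i)" if "i < n" "j < n" for i j
    using sym that E by (metis carrier_matD index_transpose_mat(1))
  have "cnj q = (\<Sum>i<n. \<Sum>j<n. v $ i * complex_of_real (E $$ (i, j)) * cnj (v $ j))"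
    unfolding q_def by simp
  also have "\<dots> = (\<Sum>j<n. \<Sum>i<n. v $ i * complex_of_real (E $$ (i, j)) * cnj (v $ j))"
    by (rule sum.swap)
  also have "\<dots> = q" unfolding q_def
    by (intro sum.cong refl) (simp add: Esym mult.commute mult.left_commute)
  finally have "cnj q = q" .
  moreover have "cnj N = N" unfolding N_def by (simp add: mult.commute)
  moreover have "N \<noteq> 0"
    using conjugate_square_eq_0_vec[OF v] v0 v
    by (simp add: N_def scalar_prod_def lessThan_atLeast0 mult.commute)
  ultimately have "cnj a = a" unfolding qN by simp
  then show ?thesis by (metis cnj.sel(2) neg_equal_zero)
qed

lemma char_poly_real_symmetric_splits:
  fixes E :: "real mat"
  assumes E: "E \<in> carrier_mat n n" and sym: "transpose_mat E = E"
  shows "\<exists>es. char_poly E = (\<Prod>e\<leftarrow>es. [:- e, 1:])"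
proof -
  interpret r: map_poly_inj_comm_ring_hom complex_of_real ..
  let ?C = "map_mat complex_of_real E"
  have C: "?C \<in> carrier_mat n n" using E by simp
  obtain as where cp: "char_poly ?C = (\<Prod>a\<leftarrow>as. [:- a, 1:])"
    using char_poly_factorized[OF C] by blast
  have "Im a = 0" if "a \<in> set as" for a
  proof (rule real_symmetric_eigenvalue_real[OF E sym])
    show "eigenvalue ?C a"
      unfolding eigenvalue_root_char_poly[OF C] cp using that by (simp add: poly_prod_list prod_list_zero_iff)
  qed
  then have "(\<Prod>a\<leftarrow>as. [:- a, 1:]) = (\<Prod>a\<leftarrow>as. [:- complex_of_real (Re a), 1:])"
    by (intro arg_cong[where f = prod_list] map_cong) (auto simp: complex_eq_iff)
  with cp have "char_poly ?C = (\<Prod>a\<leftarrow>as. [:- complex_of_real (Re a), 1:])" by simp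
  moreover have "char_poly ?C = map_poly complex_of_real (char_poly E)"
    using of_real_hom.char_poly_hom[OF E] by simp
  moreover have "(\<Prod>a\<leftarrow>as. [:- complex_of_real (Re a), 1:])
      = map_poly complex_of_real (\<Prod>e\<leftarrow>map Re as. [:- e, 1:])"
    by (simp add: r.hom_prod_list comp_def)
  ultimately have "map_poly complex_of_real (char_poly E)
      = map_poly complex_of_real (\<Prod>e\<leftarrow>map Re as. [:- e, 1:])" by simp
  then show ?thesis unfolding r.eq_iff by blast
qed

definition orthogonal_matrix :: "nat \<Rightarrow> real mat \<Rightarrow> bool" where
  "orthogonal_matrix n U \<longleftrightarrow>
     U \<in> carrier_mat n n \<and> transpose_mat U * U = 1\<^sub>m n \<and> U * transpose_mat U = 1\<^sub>m n"

lemma orthogonal_matrix_mult: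
  assumes "orthogonal_matrix n U" and "orthogonal_matrix n V"
  shows "orthogonal_matrix n (U * V)"
proof -
  have U: "U \<in> carrier_mat n n" "transpose_mat U * U = 1\<^sub>m n" "U * transpose_mat U = 1\<^sub>m n"
    and V: "V \<in> carrier_mat n n" "transpose_mat V * V = 1\<^sub>m n" "V * transpose_mat V = 1\<^sub>m n"
    using assms unfolding orthogonal_matrix_def by auto
  have UT: "transpose_mat U \<in> carrier_mat n n" and VT: "transpose_mat V \<in> carrier_mat n n"
    using U V by auto
  have "transpose_mat (U * V) * (U * V) = transpose_mat V * ((transpose_mat U * U) * V)"
    using U(1) V(1) UT VT by (simp add: transpose_mult assoc_mult_mat[of _ n n _ n _ n])
  also have "\<dots> = 1\<^sub>m n" using U V by (simp del: assoc_mult_mat)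
  finally have "transpose_mat (U * V) * (U * V) = 1\<^sub>m n" .
  have "(U * V) * transpose_mat (U * V) = U * ((V * transpose_mat V) * transpose_mat U)"
    using U(1) V(1) UT VT by (simp add: transpose_mult assoc_mult_mat[of _ n n _ n _ n])
  also have "\<dots> = 1\<^sub>m n" using U V by (simp del: assoc_mult_mat)
  finally show ?thesis
    using U V \<open>transpose_mat (U * V) * (U * V) = 1\<^sub>m n\<close> unfolding orthogonal_matrix_def by simp
qed

lemma four_block_diag_mult:
  assumes A: "A \<in> carrier_mat 1 1" and B: "B \<in> carrier_mat 1 1"
    and C: "C \<in> carrier_mat m m" and D: "D \<in> carrier_mat m m"
  shows "four_block_mat A (0\<^sub>m 1 m) (0\<^sub>m m 1) C * four_block_mat B (0\<^sub>m 1 m) (0\<^sub>m m 1) (D :: real mat)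
    = four_block_mat (A * B) (0\<^sub>m 1 m) (0\<^sub>m m 1) (C * D)"
  by (subst mult_four_block_mat[OF A zero_carrier_mat zero_carrier_mat C B zero_carrier_mat zero_carrier_mat D])
    (use A B C D in simp)

lemma orthogonal_matrix_four_block:
  assumes "orthogonal_matrix m U"
  shows "orthogonal_matrix (Suc m) (four_block_mat (1\<^sub>m 1) (0\<^sub>m 1 m) (0\<^sub>m m 1) U)"
proof -
  have U: "U \<in> carrier_mat m m" "transpose_mat U * U = 1\<^sub>m m" "U * transpose_mat U = 1\<^sub>m m"
    using assms unfolding orthogonal_matrix_def by auto
  let ?V = "four_block_mat (1\<^sub>m 1) (0\<^sub>m 1 m) (0\<^sub>m m 1) U"
  have VT: "transpose_mat ?V = four_block_mat (1\<^sub>m 1) (0\<^sub>m 1 m) (0\<^sub>m m 1) (transpose_mat U)"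
    by (subst transpose_four_block_mat[OF one_carrier_mat zero_carrier_mat zero_carrier_mat U(1)]) simp
  have "?V \<in> carrier_mat (Suc m) (Suc m)"
    using four_block_carrier_mat[OF one_carrier_mat U(1), of 1 "0\<^sub>m 1 m" "0\<^sub>m m 1"] by simp
  moreover have "transpose_mat ?V * ?V = 1\<^sub>m (Suc m)"
    unfolding VT using U by (subst four_block_diag_mult) auto
  moreover have "?V * transpose_mat ?V = 1\<^sub>m (Suc m)"
    unfolding VT using U by (subst four_block_diag_mult) auto
  ultimately show ?thesis unfolding orthogonal_matrix_def by blast
qed

text \<open>For a unit vector \<open>u \<noteq> e\<^sub>0\<close> this is the reflection \<open>I - w w\<^sup>T / (1 - u\<^sub>0)\<close> with \<open>w = u - e\<^sub>0\<close>,
  which exchanges \<open>e\<^sub>0\<close> and \<open>u\<close>.\<close>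
definition householder_mat :: "nat \<Rightarrow> real vec \<Rightarrow> real mat" where
  "householder_mat n u = (if u $ 0 = 1 then 1\<^sub>m n else
     mat n n (\<lambda>(i, j). (if i = j then 1 else 0) -
        (u $ i - (if i = 0 then 1 else 0)) * (u $ j - (if j = 0 then 1 else 0)) / (1 - u $ 0)))"

lemma householder_mat_carrier [simp]: "householder_mat n u \<in> carrier_mat n n"
  unfolding householder_mat_def by auto

lemma transpose_householder_mat: "transpose_mat (householder_mat n u) = householder_mat n u"
  unfolding householder_mat_def by (auto intro!: eq_matI simp: mult.commute)

lemma unit_vec_first_coordinate:
  fixes u :: "real vec"
  assumes n: "n \<ge> 1" and u: "u \<in> carrier_vec n" and nu: "u \<bullet> u = 1" and u0: "u $ 0 = 1"
  shows "u = unit_vec n 0"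
proof -
  have "(\<Sum>i\<in>{0..<n}. (u $ i)^2) = 1" using nu u unfolding scalar_prod_def by (simp add: power2_eq_square)
  moreover have "{0..<n} = insert 0 {1..<n}" using n by auto
  ultimately have "(\<Sum>i\<in>{1..<n}. (u $ i)^2) = 0" using u0 by simp
  then have "u $ i = 0" if "i \<in> {1..<n}" for i
    using sum_nonneg_eq_0_iff[of "{1..<n}" "\<lambda>i. (u $ i)^2"] that by auto
  then show ?thesis using u u0 by (intro eq_vecI) (auto simp: unit_vec_def)
qed

lemma householder_mat_explicit:
  assumes n: "n \<ge> 1" and u: "u \<in> carrier_vec n" and nu: "u \<bullet> u = 1" and u0: "u $ 0 \<noteq> 1"
  defines "w \<equiv> \<lambda>i. u $ i - (if i = 0 then 1 else 0)" and "d \<equiv> 1 - u $ 0"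
  shows "householder_mat n u = mat n n (\<lambda>(i, j). (if i = j then 1 else 0) - w i * w j / d)"
    and "d > 0" and "(\<Sum>l\<in>{0..<n}. w l * w l) = 2 * d"
proof -
  show "householder_mat n u = mat n n (\<lambda>(i, j). (if i = j then 1 else 0) - w i * w j / d)"
    unfolding householder_mat_def w_def d_def using u0 by simp
  have sq: "(\<Sum>l\<in>{0..<n}. (u $ l)^2) = 1" using nu u unfolding scalar_prod_def by (simp add: power2_eq_square)
  have "(u $ 0)^2 \<le> 1" using member_le_sum[of 0 "{0..<n}" "\<lambda>l. (u $ l)^2"] n sq by simp
  then have "u $ 0 \<le> 1" by (simp add: abs_square_le_1 abs_le_D1)
  then show "d > 0" using u0 unfolding d_def by simp
  have "(\<Sum>l\<in>{0..<n}. w l * w l)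
      = (\<Sum>l\<in>{0..<n}. (u $ l)^2 - 2 * (if l = 0 then u $ l else 0) + (if l = 0 then 1 else 0))"
    unfolding w_def by (intro sum.cong refl) (auto simp: power2_eq_square algebra_simps)
  also have "\<dots> = 2 * d"
    using n sq unfolding d_def by (simp add: sum.distrib sum_subtractf sum_distrib_left[symmetric] sum.delta')
  finally show "(\<Sum>l\<in>{0..<n}. w l * w l) = 2 * d" .
qed

lemma sum_delta_mult_left:
  fixes f :: "nat \<Rightarrow> real"
  assumes "i < n" shows "(\<Sum>l\<in>{0..<n}. (if i = l then 1 else 0) * f l) = f i"
proof -
  have "(\<Sum>l\<in>{0..<n}. (if i = l then 1 else 0) * f l) = (\<Sum>l\<in>{0..<n}. if i = l then f l else 0)"
    by (rule sum.cong) auto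
  then show ?thesis using assms by simp
qed

lemma sum_delta_mult_right:
  fixes f :: "nat \<Rightarrow> real"
  assumes "j < n" shows "(\<Sum>l\<in>{0..<n}. f l * (if l = j then 1 else 0)) = f j"
proof -
  have "(\<Sum>l\<in>{0..<n}. f l * (if l = j then 1 else 0)) = (\<Sum>l\<in>{0..<n}. if l = j then f l else 0)"
    by (rule sum.cong) auto
  then show ?thesis using assms by simp
qed

lemma householder_mat_involution:
  assumes n: "n \<ge> 1" and u: "u \<in> carrier_vec n" and nu: "u \<bullet> u = 1"
  shows "householder_mat n u * householder_mat n u = 1\<^sub>m n"
proof (cases "u $ 0 = 1")
  case False
  define w where "w i = u $ i - (if i = 0 then 1 else 0)" for i
  define d where "d = 1 - u $ 0"
  note H = householder_mat_explicit[OF n u nu False, folded w_def d_def]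
  show ?thesis
  proof (rule eq_matI)
    fix i j assume "i < dim_row (1\<^sub>m n :: real mat)" "j < dim_col (1\<^sub>m n :: real mat)"
    then have i: "i < n" and j: "j < n" by auto
    have "(householder_mat n u * householder_mat n u) $$ (i, j)
        = (\<Sum>l\<in>{0..<n}. ((if i = l then 1 else 0) - w i * w l / d) * ((if l = j then 1 else 0) - w l * w j / d))"
      unfolding H(1) using i j by (simp add: scalar_prod_def row_def col_def)
    also have "\<dots> = (\<Sum>l\<in>{0..<n}. (if i = l then 1 else 0) * (if l = j then 1 else 0))
        - (\<Sum>l\<in>{0..<n}. (if i = l then 1 else 0) * (w l * w j / d))
        - (\<Sum>l\<in>{0..<n}. (w i * w l / d) * (if l = j then 1 else 0))
        + (w i * w j / d^2) * (\<Sum>l\<in>{0..<n}. w l * w l)"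
      by (simp add: sum.distrib sum_subtractf sum_distrib_left power2_eq_square algebra_simps)
    also have "\<dots> = (if i = j then 1 else 0) - 2 * (w i * w j / d) + (w i * w j / d^2) * (2 * d)"
      unfolding H(3) sum_delta_mult_left[OF i] sum_delta_mult_right[OF j] by simp
    also have "\<dots> = 1\<^sub>m n $$ (i, j)" using H(2) i j by (simp add: power2_eq_square field_simps)
    finally show "(householder_mat n u * householder_mat n u) $$ (i, j) = 1\<^sub>m n $$ (i, j)" .
  qed (auto simp: H(1))
qed (simp add: householder_mat_def)

lemma householder_mat_unit_vec:
  assumes n: "n \<ge> 1" and u: "u \<in> carrier_vec n" and nu: "u \<bullet> u = 1"
  shows "householder_mat n u *\<^sub>v unit_vec n 0 = u"
proof (cases "u $ 0 = 1")
  case False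
  define w where "w i = u $ i - (if i = 0 then 1 else 0)" for i
  define d where "d = 1 - u $ 0"
  note H = householder_mat_explicit[OF n u nu False, folded w_def d_def]
  show ?thesis
  proof (rule eq_vecI)
    fix i assume "i < dim_vec u"
    then have i: "i < n" using u by simp
    have "(householder_mat n u *\<^sub>v unit_vec n 0) $ i
        = (\<Sum>l\<in>{0..<n}. ((if i = l then 1 else 0) - w i * w l / d) * (if l = 0 then 1 else 0))"
      unfolding H(1) using i by (simp add: scalar_prod_def row_def unit_vec_def)
    also have "\<dots> = (if i = 0 then 1 else 0) - w i * w 0 / d"
      using n by (simp add: if_distrib sum.delta cong: if_cong)
    also have "\<dots> = u $ i" using H(2) unfolding w_def d_def by (simp add: field_simps power2_eq_square)
    finally show "(householder_mat n u *\<^sub>v unit_vec n 0) $ i = u $ i" .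
  qed (use u in \<open>auto simp: H(1)\<close>)
qed (use unit_vec_first_coordinate[OF assms] in \<open>simp add: householder_mat_def\<close>)

lemma unit_eigenvector:
  fixes A :: "real mat"
  assumes A: "A \<in> carrier_mat n n" and ev: "eigenvalue A e"
  obtains u where "u \<in> carrier_vec n" "u \<bullet> u = 1" "A *\<^sub>v u = e \<cdot>\<^sub>v u"
proof -
  obtain v where "eigenvector A v e" using ev unfolding eigenvalue_def by blast
  then have v: "v \<in> carrier_vec n" and v0: "v \<noteq> 0\<^sub>v n" and Av: "A *\<^sub>v v = e \<cdot>\<^sub>v v"
    using A unfolding eigenvector_def by auto
  have vv: "v \<bullet> v > 0" using conjugate_square_greater_0_vec[OF v] v0 by simp
  define u where "u = (1 / sqrt (v \<bullet> v)) \<cdot>\<^sub>v v"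
  show ?thesis
  proof (rule that)
    show "u \<in> carrier_vec n" unfolding u_def using v by simp
    show "u \<bullet> u = 1" unfolding u_def using v vv
      by (simp add: smult_scalar_prod_distrib scalar_prod_smult_distrib real_sqrt_mult[symmetric])
    show "A *\<^sub>v u = e \<cdot>\<^sub>v u" unfolding u_def using A v Av
      by (simp add: mult_mat_vec smult_smult_assoc mult.commute)
  qed
qed

lemma symmetric_mat_eigen_first_column:
  fixes B :: "real mat"
  assumes B: "B \<in> carrier_mat (Suc m) (Suc m)" and sym: "transpose_mat B = B"
    and Be: "B *\<^sub>v unit_vec (Suc m) 0 = e \<cdot>\<^sub>v unit_vec (Suc m) 0"
  defines "B' \<equiv> mat m m (\<lambda>(i, j). B $$ (Suc i, Suc j))"
  shows "B = four_block_mat (mat 1 1 (\<lambda>_. e)) (0\<^sub>m 1 m) (0\<^sub>m m 1) B'" and "transpose_mat B' = B'"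
proof -
  have col0: "B $$ (i, 0) = (if i = 0 then e else 0)" if i: "i < Suc m" for i
  proof -
    have "(B *\<^sub>v unit_vec (Suc m) 0) $ i = B $$ (i, 0)"
      using B i by (simp add: row_def scalar_prod_right_unit)
    then show ?thesis using Be i by (cases "i = 0") auto
  qed
  have Bsym: "B $$ (i, j) = B $$ (j, i)" if "i < Suc m" "j < Suc m" for i j
    using sym that B by (metis carrier_matD index_transpose_mat(1))
  show "B = four_block_mat (mat 1 1 (\<lambda>_. e)) (0\<^sub>m 1 m) (0\<^sub>m m 1) B'"
  proof (rule eq_matI)
    fix i j assume "i < dim_row (four_block_mat (mat 1 1 (\<lambda>_. e)) (0\<^sub>m 1 m) (0\<^sub>m m 1) B')"
      "j < dim_col (four_block_mat (mat 1 1 (\<lambda>_. e)) (0\<^sub>m 1 m) (0\<^sub>m m 1) B')"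
    then have i: "i < Suc m" and j: "j < Suc m" by (auto simp: B'_def)
    show "B $$ (i, j) = four_block_mat (mat 1 1 (\<lambda>_. e)) (0\<^sub>m 1 m) (0\<^sub>m m 1) B' $$ (i, j)"
    proof (cases "i = 0")
      case True
      then show ?thesis using col0[OF j] Bsym[OF i j] i j by (simp add: B'_def)
    next
      case False
      then show ?thesis using col0[OF i] i j by (cases j) (auto simp: B'_def)
    qed
  qed (use B in \<open>auto simp: B'_def\<close>)
  show "transpose_mat B' = B'"
    unfolding B'_def by (rule eq_matI) (use Bsym in auto)
qed

text \<open>Conjugating by the Householder reflection that sends \<open>e\<^sub>0\<close> to a unit eigenvector splits off
  the eigenvalue as a \<open>1 \<times> 1\<close> block.\<close>
lemma real_symmetric_deflation:
  fixes A :: "real mat"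
  assumes A: "A \<in> carrier_mat (Suc m) (Suc m)" and sym: "transpose_mat A = A" and ev: "eigenvalue A e"
  obtains H A' where "orthogonal_matrix (Suc m) H" "A' \<in> carrier_mat m m" "transpose_mat A' = A'"
    "A = H * four_block_mat (mat 1 1 (\<lambda>_. e)) (0\<^sub>m 1 m) (0\<^sub>m m 1) A' * transpose_mat H"
proof -
  let ?n = "Suc m" and ?e0 = "unit_vec (Suc m) 0"
  obtain u where u: "u \<in> carrier_vec ?n" "u \<bullet> u = 1" and Au: "A *\<^sub>v u = e \<cdot>\<^sub>v u"
    using unit_eigenvector[OF A ev] by blast
  define H where "H = householder_mat ?n u"
  have H: "H \<in> carrier_mat ?n ?n" and HT: "transpose_mat H = H"
    and HH: "H * H = 1\<^sub>m ?n" and He: "H *\<^sub>v ?e0 = u"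
    unfolding H_def using householder_mat_involution[OF _ u] householder_mat_unit_vec[OF _ u]
    by (auto simp: transpose_householder_mat)
  have orth: "orthogonal_matrix ?n H" unfolding orthogonal_matrix_def using H HT HH by simp
  define B where "B = H * A * H"
  have B: "B \<in> carrier_mat ?n ?n" unfolding B_def using H A by simp
  have HA: "H * A \<in> carrier_mat ?n ?n" using H A by simp
  have "transpose_mat B = transpose_mat H * (transpose_mat A * transpose_mat H)"
    unfolding B_def transpose_mult[OF HA H] transpose_mult[OF H A] ..
  then have symB: "transpose_mat B = B"
    unfolding B_def HT sym using H A by simp
  have Hu: "H *\<^sub>v u = ?e0" using He H HH by (metis assoc_mult_mat_vec one_mult_mat_vec unit_vec_carrier)
  have "B *\<^sub>v ?e0 = (H * A) *\<^sub>v (H *\<^sub>v ?e0)"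
    unfolding B_def by (rule assoc_mult_mat_vec[OF HA H]) simp
  also have "\<dots> = H *\<^sub>v (A *\<^sub>v (H *\<^sub>v ?e0))"
    by (rule assoc_mult_mat_vec[OF H A]) (use H in simp)
  also have "\<dots> = e \<cdot>\<^sub>v ?e0" unfolding He Au using H u Hu by (simp add: mult_mat_vec)
  finally have "B *\<^sub>v ?e0 = e \<cdot>\<^sub>v ?e0" .
  note blocks = symmetric_mat_eigen_first_column[OF B symB this]
  have "H * B * H = (H * H) * A * (H * H)"
    unfolding B_def using H A by (simp add: assoc_mult_mat[of _ ?n ?n _ ?n _ ?n])
  then have "A = H * B * transpose_mat H" using HH A HT by simp
  with blocks orth show ?thesis by (intro that) auto
qed

lemma mat_diag_Cons:
  "mat_diag (Suc m) (\<lambda>i. (e # es) ! i)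
     = four_block_mat (mat 1 1 (\<lambda>_. e)) (0\<^sub>m 1 m) (0\<^sub>m m 1) (mat_diag m (\<lambda>i. es ! i))"
  by (rule eq_matI) (auto simp: mat_diag_def nth_Cons')

lemma similar_mat_orthogonal_conj:
  assumes H: "orthogonal_matrix n H" and B: "B \<in> carrier_mat n n"
  shows "similar_mat (H * B * transpose_mat H) B"
proof -
  have Hc: "H \<in> carrier_mat n n" "transpose_mat H \<in> carrier_mat n n"
    "H * transpose_mat H = 1\<^sub>m n" "transpose_mat H * H = 1\<^sub>m n"
    using H unfolding orthogonal_matrix_def by auto
  have "similar_mat_wit (H * B * transpose_mat H) B H (transpose_mat H)"
    unfolding similar_mat_wit_def Let_def using Hc B by auto
  then show ?thesis unfolding similar_mat_def by blast
qed

lemma char_poly_four_block_one: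
  assumes "A \<in> carrier_mat m m"
  shows "char_poly (four_block_mat (mat 1 1 (\<lambda>_. e)) (0\<^sub>m 1 m) (0\<^sub>m m 1) A) = [:- e, 1:] * char_poly A"
proof -
  have "char_poly (four_block_mat (mat 1 1 (\<lambda>_. e)) (0\<^sub>m 1 m) (0\<^sub>m m 1) A)
      = char_poly (mat 1 1 (\<lambda>_. e)) * char_poly A"
    by (rule char_poly_four_block_zeros_col) (use assms in auto)
  then show ?thesis by (simp add: char_poly_defs det_def sign_def)
qed

lemma four_block_conj_mat_diag:
  fixes e :: real
  assumes U: "U \<in> carrier_mat m m"
  defines "V \<equiv> four_block_mat (1\<^sub>m 1) (0\<^sub>m 1 m) (0\<^sub>m m 1) U"
  shows "V * mat_diag (Suc m) (\<lambda>i. (e # es) ! i) * transpose_mat V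
    = four_block_mat (mat 1 1 (\<lambda>_. e)) (0\<^sub>m 1 m) (0\<^sub>m m 1) (U * mat_diag m (\<lambda>i. es ! i) * transpose_mat U)"
proof -
  have VT: "transpose_mat V = four_block_mat (1\<^sub>m 1) (0\<^sub>m 1 m) (0\<^sub>m m 1) (transpose_mat U)"
    unfolding V_def by (subst transpose_four_block_mat[OF one_carrier_mat zero_carrier_mat zero_carrier_mat U]) simp
  have "V * mat_diag (Suc m) (\<lambda>i. (e # es) ! i)
      = four_block_mat (mat 1 1 (\<lambda>_. e)) (0\<^sub>m 1 m) (0\<^sub>m m 1) (U * mat_diag m (\<lambda>i. es ! i))"
    unfolding mat_diag_Cons V_def using U by (subst four_block_diag_mult) auto
  also have "\<dots> * transpose_mat V
      = four_block_mat (mat 1 1 (\<lambda>_. e)) (0\<^sub>m 1 m) (0\<^sub>m m 1) (U * mat_diag m (\<lambda>i. es ! i) * transpose_mat U)"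
    unfolding VT using U by (subst four_block_diag_mult) auto
  finally show ?thesis .
qed

lemma mult_conj_transpose:
  fixes H V D :: "real mat"
  assumes H: "H \<in> carrier_mat n n" and V: "V \<in> carrier_mat n n" and D: "D \<in> carrier_mat n n"
  shows "(H * V) * D * transpose_mat (H * V) = H * (V * D * transpose_mat V) * transpose_mat H"
proof -
  have "transpose_mat H \<in> carrier_mat n n" "transpose_mat V \<in> carrier_mat n n"
    "V * D \<in> carrier_mat n n" "V * D * transpose_mat V \<in> carrier_mat n n"
    using H V D by auto
  then show ?thesis using H V D by (simp add: transpose_mult[OF H V] assoc_mult_mat[of _ n n _ n _ n])
qed

theorem real_symmetric_diagonalization:
  fixes A :: "real mat"
  assumes "A \<in> carrier_mat n n" and "transpose_mat A = A" and "char_poly A = (\<Prod>e\<leftarrow>es. [:- e, 1:])"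
  shows "\<exists>U. orthogonal_matrix n U \<and> A = U * mat_diag n (\<lambda>i. es ! i) * transpose_mat U"
  using assms
proof (induction es arbitrary: A n)
  case Nil
  then have "n = 0" using degree_monic_char_poly[of A n] by simp
  then show ?case
    using Nil(1) by (intro exI[of _ "1\<^sub>m 0"]) (auto simp: orthogonal_matrix_def intro!: eq_matI)
next
  case (Cons e es A n)
  note A = Cons.prems(1) and sym = Cons.prems(2) and cp = Cons.prems(3)
  define m where "m = length es"
  have n: "n = Suc m"
    using degree_monic_char_poly[OF A] cp degree_linear_factors[of uminus "e # es"] unfolding m_def by simp
  have "eigenvalue A e" unfolding eigenvalue_root_char_poly[OF A] cp by simp
  then obtain H A' where H: "orthogonal_matrix n H" and A': "A' \<in> carrier_mat m m" "transpose_mat A' = A'"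
    and AH: "A = H * four_block_mat (mat 1 1 (\<lambda>_. e)) (0\<^sub>m 1 m) (0\<^sub>m m 1) A' * transpose_mat H"
    using real_symmetric_deflation[of A m e] A sym n by blast
  have B: "four_block_mat (mat 1 1 (\<lambda>_. e)) (0\<^sub>m 1 m) (0\<^sub>m m 1) A' \<in> carrier_mat n n"
    using A' n by auto
  have "char_poly A = [:- e, 1:] * char_poly A'"
    unfolding AH char_poly_four_block_one[OF A'(1), symmetric]
    by (rule char_poly_similar[OF similar_mat_orthogonal_conj[OF H B]])
  then have "[:- e, 1:] * char_poly A' = [:- e, 1:] * (\<Prod>e\<leftarrow>es. [:- e, 1:])"
    unfolding cp by (simp only: list.map prod_list.Cons)
  then have "char_poly A' = (\<Prod>e\<leftarrow>es. [:- e, 1:])"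
    by (rule mult_left_cancel[THEN iffD1, rotated]) simp
  then obtain U' where U': "orthogonal_matrix m U'"
    and A'U': "A' = U' * mat_diag m (\<lambda>i. es ! i) * transpose_mat U'"
    using Cons.IH A' by blast
  define V where "V = four_block_mat (1\<^sub>m 1) (0\<^sub>m 1 m) (0\<^sub>m m 1) U'"
  have V: "orthogonal_matrix n V" unfolding V_def n by (rule orthogonal_matrix_four_block[OF U'])
  have U'c: "U' \<in> carrier_mat m m" using U' unfolding orthogonal_matrix_def by simp
  have "A = H * (V * mat_diag n (\<lambda>i. (e # es) ! i) * transpose_mat V) * transpose_mat H"
    unfolding AH n V_def four_block_conj_mat_diag[OF U'c] A'U' ..
  also have "\<dots> = (H * V) * mat_diag n (\<lambda>i. (e # es) ! i) * transpose_mat (H * V)"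
    by (rule mult_conj_transpose[symmetric]) (use H V in \<open>auto simp: orthogonal_matrix_def\<close>)
  finally show ?case using orthogonal_matrix_mult[OF H V] by blast
qed

lemma index_mult_mat_sum:
  assumes "A \<in> carrier_mat n m" and "B \<in> carrier_mat m p" and "i < n" and "j < p"
  shows "(A * B) $$ (i, j) = (\<Sum>l<m. A $$ (i, l) * B $$ (l, j))"
  using assms by (simp add: scalar_prod_def row_def col_def lessThan_atLeast0)

lemma conj_mat_diag_entry:
  assumes U: "U \<in> carrier_mat n n" and a: "a < n" and b: "b < n"
  shows "(U * mat_diag n f * transpose_mat U) $$ (a, b) = (\<Sum>j<n. U $$ (a, j) * f j * U $$ (b, j))"
  using U a b by (simp add: mat_diag_mult_right[OF U] scalar_prod_def row_def col_def lessThan_atLeast0)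

lemma conj_mat_diag_power:
  assumes U: "orthogonal_matrix n U" and E: "E = U * mat_diag n f * transpose_mat U"
  shows "E ^\<^sub>m i = U * mat_diag n (\<lambda>j. f j ^ i) * transpose_mat U"
proof (induction i)
  case 0
  have "U * transpose_mat U = 1\<^sub>m n" "U \<in> carrier_mat n n" using U unfolding orthogonal_matrix_def by auto
  moreover have "E \<in> carrier_mat n n" using U unfolding E orthogonal_matrix_def by auto
  ultimately show ?case by simp
next
  case (Suc i)
  have Uc: "U \<in> carrier_mat n n" "transpose_mat U \<in> carrier_mat n n" and UTU: "transpose_mat U * U = 1\<^sub>m n"
    using U unfolding orthogonal_matrix_def by auto
  define Di D where "Di = mat_diag n (\<lambda>j. f j ^ i)" and "D = mat_diag n f"
  have c: "Di \<in> carrier_mat n n" "D \<in> carrier_mat n n" unfolding Di_def D_def by auto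
  have "E ^\<^sub>m Suc i = U * Di * transpose_mat U * (U * D * transpose_mat U)"
    using Suc unfolding E Di_def D_def by simp
  also have "\<dots> = U * (Di * ((transpose_mat U * U) * (D * transpose_mat U)))"
    using Uc c by (simp add: assoc_mult_mat[of _ n n _ n _ n])
  also have "\<dots> = U * (Di * D) * transpose_mat U"
    unfolding UTU using Uc c by (simp add: assoc_mult_mat[of _ n n _ n _ n])
  finally show ?case unfolding Di_def D_def by (simp add: mult.commute)
qed

lemma newton_T_conj_mat_diag:
  fixes f :: "nat \<Rightarrow> real"
  assumes U: "orthogonal_matrix n U" and E: "E = U * mat_diag n f * transpose_mat U"
    and sigma: "\<And>j. sigma j E = esym_on {0..<n} f j" and k: "1 \<le> k"
  shows "newton_T k E = U * mat_diag n (\<lambda>j. esym_on ({0..<n} - {j}) f (k - 1)) * transpose_mat U"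
proof -
  have Uc: "U \<in> carrier_mat n n" using U unfolding orthogonal_matrix_def by simp
  have Ec: "E \<in> carrier_mat n n" using Uc unfolding E by (intro mult_carrier_mat) auto
  show ?thesis
  proof (rule eq_matI)
    fix a b assume "a < dim_row (U * mat_diag n (\<lambda>j. esym_on ({0..<n} - {j}) f (k - 1)) * transpose_mat U)"
      "b < dim_col (U * mat_diag n (\<lambda>j. esym_on ({0..<n} - {j}) f (k - 1)) * transpose_mat U)"
    then have a: "a < n" and b: "b < n" using Uc by auto
    have "newton_T k E $$ (a, b)
        = (\<Sum>i<k. (-1) ^ i * esym_on {0..<n} f (k - 1 - i) * (\<Sum>j<n. U $$ (a, j) * f j ^ i * U $$ (b, j)))"
      unfolding newton_T_def using Ec a b
      by (simp add: sigma conj_mat_diag_power[OF U E] conj_mat_diag_entry[OF Uc a b])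
    also have "\<dots> = (\<Sum>j<n. U $$ (a, j) * (\<Sum>i<Suc (k - 1). (-1) ^ i * esym_on {0..<n} f (k - 1 - i) * f j ^ i) * U $$ (b, j))"
      using k by (simp add: sum_distrib_left sum_distrib_right mult_ac sum.swap[of _ "{..<k}"])
    also have "\<dots> = (\<Sum>j<n. U $$ (a, j) * esym_on ({0..<n} - {j}) f (k - 1) * U $$ (b, j))"
    proof (rule sum.cong[OF refl])
      fix j assume "j \<in> {..<n}"
      then have "(\<Sum>i<Suc (k - 1). (-1) ^ i * esym_on {0..<n} f (k - 1 - i) * f j ^ i)
          = esym_on ({0..<n} - {j}) f (k - 1)"
        by (intro esym_on_remove_expansion) auto
      then show "U $$ (a, j) * (\<Sum>i<Suc (k - 1). (-1) ^ i * esym_on {0..<n} f (k - 1 - i) * f j ^ i) * U $$ (b, j)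
          = U $$ (a, j) * esym_on ({0..<n} - {j}) f (k - 1) * U $$ (b, j)" by (simp only:)
    qed
    also have "\<dots> = (U * mat_diag n (\<lambda>j. esym_on ({0..<n} - {j}) f (k - 1)) * transpose_mat U) $$ (a, b)"
      by (rule conj_mat_diag_entry[OF Uc a b, symmetric])
    finally show "newton_T k E $$ (a, b) = \<dots>" .
  qed (use Ec Uc in \<open>auto simp: newton_T_def\<close>)
qed

lemma mat_inner_smult_one_minus_vtensor:
  fixes T :: "real mat"
  assumes T: "T \<in> carrier_mat n n" and v: "v \<in> carrier_vec n"
  shows "mat_inner T (c \<cdot>\<^sub>m 1\<^sub>m n - vtensor v v) = c * mat_trace T - v \<bullet> (T *\<^sub>v v)"
proof -
  let ?M = "c \<cdot>\<^sub>m 1\<^sub>m n - vtensor v v"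
  have M: "?M \<in> carrier_mat n n" using v unfolding vtensor_def by auto
  have "mat_inner T ?M = (\<Sum>a<n. \<Sum>b<n. T $$ (a, b) * ?M $$ (b, a))"
    unfolding mat_inner_def mat_trace_def using T M by (simp add: index_mult_mat_sum[OF T M])
  also have "\<dots> = (\<Sum>a<n. c * T $$ (a, a) - v $ a * (\<Sum>b<n. T $$ (a, b) * v $ b))"
  proof (rule sum.cong[OF refl])
    fix a assume a: "a \<in> {..<n}"
    have "(\<Sum>b<n. T $$ (a, b) * ?M $$ (b, a))
        = (\<Sum>b<n. (if b = a then c * T $$ (a, b) else 0) - v $ a * (T $$ (a, b) * v $ b))"
      using a v by (intro sum.cong refl) (auto simp: vtensor_def algebra_simps)
    then show "(\<Sum>b<n. T $$ (a, b) * ?M $$ (b, a)) = c * T $$ (a, a) - v $ a * (\<Sum>b<n. T $$ (a, b) * v $ b)"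
      using a by (simp add: sum_subtractf sum_distrib_left)
  qed
  also have "\<dots> = c * mat_trace T - v \<bullet> (T *\<^sub>v v)"
    using T v by (simp add: mat_trace_def sum_subtractf sum_distrib_left scalar_prod_def row_def lessThan_atLeast0)
  finally show ?thesis .
qed

lemma mat_trace_conj_mat_diag:
  assumes U: "orthogonal_matrix n U"
  shows "mat_trace (U * mat_diag n t * transpose_mat U) = (\<Sum>j<n. t j)"
proof -
  have Uc: "U \<in> carrier_mat n n" and UTU: "transpose_mat U * U = 1\<^sub>m n"
    using U unfolding orthogonal_matrix_def by auto
  have col: "(\<Sum>a<n. U $$ (a, j) * U $$ (a, j)) = 1" if "j < n" for j
    using arg_cong[OF UTU, of "\<lambda>M. M $$ (j, j)"] Uc that
    by (simp add: scalar_prod_def row_def col_def lessThan_atLeast0)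
  have "mat_trace (U * mat_diag n t * transpose_mat U) = (\<Sum>a<n. \<Sum>j<n. t j * (U $$ (a, j) * U $$ (a, j)))"
    unfolding mat_trace_def using Uc
    by (intro sum.cong) (auto simp: conj_mat_diag_entry[OF Uc] mult_ac simp del: index_mult_mat(1))
  also have "\<dots> = (\<Sum>j<n. t j * (\<Sum>a<n. U $$ (a, j) * U $$ (a, j)))"
    by (subst sum.swap) (simp add: sum_distrib_left)
  finally show ?thesis using col by simp
qed

lemma quadratic_form_conj_mat_diag:
  assumes U: "orthogonal_matrix n U" and v: "v \<in> carrier_vec n"
  shows "v \<bullet> ((U * mat_diag n t * transpose_mat U) *\<^sub>v v) = (\<Sum>j<n. t j * ((transpose_mat U *\<^sub>v v) $ j)^2)"
proof -
  have Uc: "U \<in> carrier_mat n n" using U unfolding orthogonal_matrix_def by simp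
  define w where "w = transpose_mat U *\<^sub>v v"
  have w: "w \<in> carrier_vec n" unfolding w_def using Uc v by simp
  have "(U * mat_diag n t * transpose_mat U) *\<^sub>v v = U *\<^sub>v (mat_diag n t *\<^sub>v w)"
    unfolding w_def using Uc v by (simp add: assoc_mult_mat_vec[of _ n n _ n])
  have x: "mat_diag n t *\<^sub>v w \<in> carrier_vec n" using w mat_diag_dim[of n t] by (metis mult_mat_vec_carrier)
  have "v \<bullet> ((U * mat_diag n t * transpose_mat U) *\<^sub>v v) = v \<bullet> (U *\<^sub>v (mat_diag n t *\<^sub>v w))"
    unfolding \<open>(U * mat_diag n t * transpose_mat U) *\<^sub>v v = U *\<^sub>v (mat_diag n t *\<^sub>v w)\<close> ..
  also have "\<dots> = w \<bullet> (mat_diag n t *\<^sub>v w)"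
    using transpose_vec_mult_scalar[OF Uc x v] unfolding w_def by simp
  also have "\<dots> = (\<Sum>j<n. t j * (w $ j)^2)"
    using w by (simp add: scalar_prod_def mat_diag_def mult_mat_vec_def row_def lessThan_atLeast0
      power2_eq_square mult_ac if_distrib sum.delta cong: if_cong)
  finally show ?thesis unfolding w_def .
qed

lemma sum_squares_transpose_orthogonal:
  assumes U: "orthogonal_matrix n U" and v: "v \<in> carrier_vec n"
  shows "(\<Sum>j<n. ((transpose_mat U *\<^sub>v v) $ j)^2) = v \<bullet> v"
proof -
  have "U \<in> carrier_mat n n" "U * transpose_mat U = 1\<^sub>m n"
    using U unfolding orthogonal_matrix_def by auto
  then show ?thesis using quadratic_form_conj_mat_diag[OF U v, of "\<lambda>_. 1"] v by simp
qed

lemma mat_inner_conj_mat_diag_ge: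
  assumes U: "orthogonal_matrix n U" and v: "v \<in> carrier_vec n" and t: "\<And>j. j < n \<Longrightarrow> t j \<le> M"
  shows "mat_inner (U * mat_diag n t * transpose_mat U) (c \<cdot>\<^sub>m 1\<^sub>m n - vtensor v v)
    \<ge> c * (\<Sum>j<n. t j) - M * (v \<bullet> v)"
proof -
  define w where "w = transpose_mat U *\<^sub>v v"
  have T: "U * mat_diag n t * transpose_mat U \<in> carrier_mat n n"
    using U unfolding orthogonal_matrix_def by auto
  have "mat_inner (U * mat_diag n t * transpose_mat U) (c \<cdot>\<^sub>m 1\<^sub>m n - vtensor v v)
      = c * (\<Sum>j<n. t j) - (\<Sum>j<n. t j * (w $ j)^2)"
    unfolding mat_inner_smult_one_minus_vtensor[OF T v] mat_trace_conj_mat_diag[OF U]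
      quadratic_form_conj_mat_diag[OF U v] w_def ..
  moreover have "(\<Sum>j<n. t j * (w $ j)^2) \<le> (\<Sum>j<n. M * (w $ j)^2)"
    using t by (intro sum_mono mult_right_mono) auto
  moreover have "(\<Sum>j<n. M * (w $ j)^2) = M * (v \<bullet> v)"
    unfolding sum_distrib_left[symmetric] w_def sum_squares_transpose_orthogonal[OF U v] ..
  ultimately show ?thesis by linarith
qed

lemma sym_mat_newton_T_diagonalization:
  assumes E: "E \<in> carrier_mat n n" and sym: "sym_mat E" and k: "1 \<le> k"
  defines "f \<equiv> \<lambda>i. eigvals E ! i"
  shows "\<And>j. sigma j E = esym_on {0..<n} f j"
    and "\<exists>U. orthogonal_matrix n U \<and>
      newton_T k E = U * mat_diag n (\<lambda>j. esym_on ({0..<n} - {j}) f (k - 1)) * transpose_mat U"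
proof -
  have symE: "transpose_mat E = E" using sym unfolding sym_mat_def by simp
  have cp: "char_poly E = (\<Prod>e\<leftarrow>eigvals E. [:- e, 1:])"
    unfolding eigvals_def using char_poly_real_symmetric_splits[OF E symE] by (rule someI_ex)
  then have "length (eigvals E) = n"
    using degree_monic_char_poly[OF E] degree_linear_factors[of uminus "eigvals E"] by simp
  then show sigma: "sigma j E = esym_on {0..<n} f j" for j
    unfolding sigma_def esym_eq_esym_on f_def by simp
  obtain U where "orthogonal_matrix n U" "E = U * mat_diag n f * transpose_mat U"
    using real_symmetric_diagonalization[OF E symE cp] unfolding f_def by blast
  with sigma k show "\<exists>U. orthogonal_matrix n U \<and>
      newton_T k E = U * mat_diag n (\<lambda>j. esym_on ({0..<n} - {j}) f (k - 1)) * transpose_mat U"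
    using newton_T_conj_mat_diag by blast
qed

theorem mainTheorem14:
  fixes n k :: nat and E :: "real mat" and v :: "real vec"
  assumes "1 \<le> k" and "2 * k \<le> n"
    and "E \<in> carrier_mat n n" and "sym_mat E"
    and "E \<in> Gamma_plus k"
    and "v \<in> carrier_vec n"
  shows "mat_inner (newton_T k E)
           ((1/2 * (v \<bullet> v)) \<cdot>\<^sub>m 1\<^sub>m n - vtensor v v)
         \<ge> (real n - 2 * real k) * (real n - real k + 1) / (2 * real n)
             * sigma (k - 1) E * (v \<bullet> v)"
proof -
  define f where "f i = eigvals E ! i" for i
  define t where "t = (\<lambda>j. esym_on ({0..<n} - {j}) f (k - 1))"
  define s where "s = sigma (k - 1) E"
  note sigma = sym_mat_newton_T_diagonalization(1)[OF assms(3,4,1), folded f_def]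
  obtain U where U: "orthogonal_matrix n U" and T: "newton_T k E = U * mat_diag n t * transpose_mat U"
    using sym_mat_newton_T_diagonalization(2)[OF assms(3,4,1), folded f_def] unfolding t_def by blast
  have sum_t: "(\<Sum>j<n. t j) = (real n - real k + 1) * s"
    using sum_esym_on_remove[of "{0..<n}" f "k - 1"] assms(1)
    unfolding t_def s_def sigma by (simp add: atLeast0LessThan of_nat_diff)
  have pos: "esym_on {0..<n} f j > 0" if "1 \<le> j" "j \<le> k" for j
    using assms(5) that unfolding Gamma_plus_def by (auto simp: sigma)
  have "t j \<le> real k * (real n - real k + 1) * s / real n" if "j < n" for j
    using esym_on_remove_le[of "{0..<n}" j k f, OF _ _ assms(1) _ pos] that assms(2)
    unfolding t_def s_def sigma by (simp add: field_simps)
  from mat_inner_conj_mat_diag_ge[OF U assms(6), of t, OF this, where c = "1/2 * (v \<bullet> v)"]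
  have "mat_inner (newton_T k E) ((1/2 * (v \<bullet> v)) \<cdot>\<^sub>m 1\<^sub>m n - vtensor v v)
      \<ge> 1/2 * (v \<bullet> v) * ((real n - real k + 1) * s) - real k * (real n - real k + 1) * s / real n * (v \<bullet> v)"
    unfolding T sum_t .
  moreover have "n > 0" using assms(1,2) by simp
  ultimately show ?thesis unfolding s_def by (simp add: field_simps)
qed

end
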